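(* Let $m,n,r$ be positive integers with $\gcd(m,n)=\gcd(m,r-1)=1$, $r^n\equiv 1 \pmod m$, and $m=p_1^{\alpha_1}p_2^{\alpha_2}\cdots p_k^{\alpha_k}$ with $k\ge 1$, $p_1,\dots,p_k$ distinct primes and $\alpha_i\ge 1$. Let $I=\{1,\dots,k\}$. For each nonempty $T\subseteq I$ let $e_T=\operatorname{lcm}_{i\in T}\operatorname{ord}_{p_i^{\alpha_i}}(r)$, where $\operatorname{ord}_{p_i^{\alpha_i}}(r)$ is the multiplicative order of $r$ modulo $p_i^{\alpha_i}$ (equivalently, $e_T$ is the least positive integer $e$ with $r^{e}\equiv 1 \pmod{p_i^{\alpha_i}}$ for all $i\in T$; it divides $n$). Then $$\psi(ZM(m,n,r))=m\,\psi(\mathbb{Z}_n)+\sum_{\emptyset\neq T\subseteq I}\ \prod_{i\in I\setminus T}p_i^{\alpha_i}\ \prod_{i\in T}\big(\psi(\mathbb{Z}_{p_i^{\alpha_i}})-p_i^{\alpha_i}\big)\ \psi\big(\langle b^{e_T}\rangle\big),$$ where $\langle b^{e_T}\rangle\cong\mathbb{Z}_{n/e_T}$ is the subgroup of $ZM(m,n,r)$ generated by $b^{e_T}$ (it is the centralizer in $\langle b\rangle$ of the subgroup of $\langle a\rangle$ of order $\prod_{i\in T}p_i^{\alpha_i}$). Here $\psi(\mathbb{Z}_{p^{\alpha}})=\frac{p^{2\alpha+1}+1}{p+1}$.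
   Context: For a finite group $G$, $\psi(G)=\sum_{x\in G} o(x)$ denotes the sum of the orders of all elements of $G$. For positive integers $m,n,r$ with $\gcd(m,n)=\gcd(m,r-1)=1$ and $r^n\equiv 1\pmod m$, the ZM-group is $ZM(m,n,r)=\langle a,b \mid a^m=b^n=1,\ b^{-1}ab=a^r\rangle$, a group of order $mn$ (these are exactly the finite groups all of whose Sylow subgroups are cyclic; $m$ is necessarily odd). *)

theory Defs
  imports "HOL-Algebra.Algebra" "HOL-Number_Theory.Number_Theory"
begin

definition psi :: "('a, 'b) monoid_scheme \<Rightarrow> nat" where
  "psi G = (\<Sum>x\<in>carrier G. group.ord G x)"

text \<open>Sum of element orders of a subgroup H of G (the order of an element of H
  computed in H agrees with its order in G).\<close>
definition psi_sub :: "('a, 'b) monoid_scheme \<Rightarrow> 'a set \<Rightarrow> nat" where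
  "psi_sub G H = psi (G\<lparr>carrier := H\<rparr>)"

text \<open>Concrete model of ZM(m,n,r) = <a,b | a^m = b^n = 1, b^-1 a b = a^r>:
  the pair (j,i) with j < n, i < m stands for b^j a^i.  Since
  a^i b^l = b^l a^(i r^l), we get (b^j a^i)(b^l a^k) = b^(j+l) a^(i r^l + k).\<close>
definition ZM :: "nat \<Rightarrow> nat \<Rightarrow> nat \<Rightarrow> (nat \<times> nat) monoid" where
  "ZM m n r = \<lparr> carrier = {0..<n} \<times> {0..<m},
     monoid.mult = (\<lambda>(j, i) (l, k). ((j + l) mod n, (i * r ^ l + k) mod m)),
     monoid.one = (0, 0) \<rparr>"

definition ZM_a :: "nat \<Rightarrow> nat \<Rightarrow> nat \<times> nat" where
  "ZM_a m n = (0, 1 mod m)"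

definition ZM_b :: "nat \<Rightarrow> nat \<Rightarrow> nat \<times> nat" where
  "ZM_b m n = (1 mod n, 0)"

end

theory Submission
  imports Defs
begin

text \<open>
  Write the element b^j a^i of ZM(m, n, r) as the pair (j, i). Its t-th power is
  (t j, i (1 + u + ... + u^(t-1))) with u = r^j; put d = gcd m (u - 1). Whenever
  u^t = 1 (mod m), the cofactor m / d divides the geometric sum 1 + ... + u^(t-1).
  For t = n this shows that every common divisor of d and m / d divides a sum that is
  congruent to n modulo it, so gcd m n = 1 makes d a unitary divisor of m. Modulo d the
  geometric sum is congruent to t, whence o(b^j a^i) = (n / gcd n j) (d / gcd d i), and
  summing over i gives psi(ZM) = sum over j of (n / gcd n j) (m / d_j) psi(Z_(d_j)).

  A unitary divisor of m is the product of the prime powers p_i^alpha_i it contains; for d_j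
  these are the ones with ord (p_i^alpha_i) r dividing j. Since psi(Z_q) is multiplicative
  (Chinese remainder theorem), expanding the product of psi_i = (psi_i - q_i) + q_i over
  subsets T and exchanging the sums over j and T leaves, for each T, the sum of n / gcd n j
  over the multiples j < n of e_T, which is psi of the subgroup generated by b^(e_T).
\<close>

section \<open>Geometric sums modulo m\<close>

lemma dvd_mult_iff_div_gcd_dvd:
  fixes q t y :: nat
  assumes "0 < q"
  shows "q dvd t * y \<longleftrightarrow> q div gcd q y dvd t"
proof -
  define g where "g = gcd q y"
  have "0 < g" using assms by (simp add: g_def)
  obtain q' y' where q': "q = g * q'" and y': "y = g * y'"
    unfolding g_def by (meson dvdE gcd_dvd1 gcd_dvd2)
  have "coprime (q div g) (y div g)"
    using div_gcd_coprime[of q y] assms by (simp add: g_def)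
  then have "coprime q' y'"
    using \<open>0 < g\<close> by (simp add: q' y')
  then have "q dvd t * y \<longleftrightarrow> q' dvd t"
    using \<open>0 < g\<close> by (simp add: q' y' mult.left_commute coprime_dvd_mult_left_iff)
  moreover have "q div g = q'"
    using \<open>0 < g\<close> by (simp add: q')
  ultimately show ?thesis by (simp add: g_def)
qed

lemma div_gcd_dvd_self:
  fixes a b :: nat
  shows "a div gcd a b dvd a"
  by (metis dvd_div_mult_self dvd_triv_left gcd_dvd1)

lemma coprime_mult_dvd_iff:
  fixes a b c :: nat
  assumes "coprime a b"
  shows "a * b dvd c \<longleftrightarrow> a dvd c \<and> b dvd c"
  using assms by (auto intro: divides_mult dest: dvd_mult_left dvd_mult_right)

lemma diff_one_mult_sum_powers:
  fixes u :: nat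
  shows "(u - 1) * (\<Sum>s<t. u ^ s) = u ^ t - 1"
proof (cases "u = 0")
  case False
  then have "int ((u - 1) * (\<Sum>s<t. u ^ s)) = int (u ^ t - 1)"
    by (simp add: of_nat_diff power_diff_1_eq)
  then show ?thesis by (simp only: of_nat_eq_iff)
qed (cases t; simp)

lemma sum_powers_cong:
  fixes u d :: nat
  assumes "[u = 1] (mod d)"
  shows "[(\<Sum>s<t. u ^ s) = t] (mod d)"
proof -
  have "[(\<Sum>s<t. u ^ s) = (\<Sum>s<t. 1)] (mod d)"
    using cong_pow[OF assms] by (intro cong_sum) (simp add: power_one)
  then show ?thesis by simp
qed

lemma cofactor_dvd_sum_powers:
  fixes m u t :: nat
  assumes "0 < m" "[u ^ t = 1] (mod m)"
  shows "m div gcd m (u - 1) dvd (\<Sum>s<t. u ^ s)"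
proof -
  have "m dvd (\<Sum>s<t. u ^ s) * (u - 1)"
    unfolding mult.commute[of _ "u - 1"] diff_one_mult_sum_powers by (rule cong_to_1_nat[OF assms(2)])
  then show ?thesis
    using assms(1) by (simp add: dvd_mult_iff_div_gcd_dvd)
qed

lemma coprime_gcd_diff_one_cofactor:
  fixes m n u :: nat
  assumes "0 < m" "0 < u" "coprime m n" "[u ^ n = 1] (mod m)"
  shows "coprime (gcd m (u - 1)) (m div gcd m (u - 1))"
proof -
  define d where "d = gcd m (u - 1)"
  define c where "c = gcd d (m div d)"
  have "c dvd u - 1"
    unfolding c_def d_def by (rule dvd_trans[OF gcd_dvd1 gcd_dvd2])
  then have "[u = 1] (mod c)"
    using assms(2) by (simp add: cong_altdef_nat)
  then have "[(\<Sum>s<n. u ^ s) = n] (mod c)"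
    by (rule sum_powers_cong)
  moreover have "c dvd (\<Sum>s<n. u ^ s)"
    using cofactor_dvd_sum_powers[OF assms(1,4)] unfolding c_def d_def
    by (rule dvd_trans[OF gcd_dvd2])
  ultimately have "c dvd n"
    using cong_dvd_iff by blast
  moreover have "c dvd m"
    unfolding c_def d_def by (rule dvd_trans[OF gcd_dvd1 gcd_dvd1])
  ultimately have "c = 1"
    using coprime_common_divisor_nat[OF assms(3)] by presburger
  then show ?thesis
    unfolding c_def d_def by (rule gcd_eq_1_imp_coprime)
qed

lemma dvd_mult_sum_powers_iff:
  fixes m n u t i :: nat
  assumes "0 < m" "0 < u" "coprime m n" "[u ^ n = 1] (mod m)" "[u ^ t = 1] (mod m)"
  shows "m dvd i * (\<Sum>s<t. u ^ s) \<longleftrightarrow> gcd m (u - 1) div gcd (gcd m (u - 1)) i dvd t"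
proof -
  define d where "d = gcd m (u - 1)"
  define S where "S = (\<Sum>s<t. u ^ s)"
  have "0 < d" using assms(1) by (simp add: d_def)
  have "coprime d (m div d)"
    unfolding d_def using assms(1-4) by (rule coprime_gcd_diff_one_cofactor)
  moreover have "m div d dvd i * S"
    using cofactor_dvd_sum_powers[OF assms(1,5)] by (simp add: d_def S_def)
  ultimately have "d * (m div d) dvd i * S \<longleftrightarrow> d dvd i * S"
    by (simp add: coprime_mult_dvd_iff)
  then have "m dvd i * S \<longleftrightarrow> d dvd i * S"
    by (simp add: d_def)
  also have "[u = 1] (mod d)"
    using assms(2) by (simp add: d_def cong_altdef_nat)
  then have "[i * S = i * t] (mod d)"
    unfolding S_def by (intro cong_scalar_left sum_powers_cong)
  then have "d dvd i * S \<longleftrightarrow> d dvd t * i"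
    unfolding mult.commute[of t] by (rule cong_dvd_iff)
  also have "\<dots> \<longleftrightarrow> d div gcd d i dvd t"
    using \<open>0 < d\<close> by (rule dvd_mult_iff_div_gcd_dvd)
  finally show ?thesis
    by (simp add: S_def d_def)
qed

lemma pow_mod_exponent_cong:
  fixes r n m x :: nat
  assumes "[r ^ n = 1] (mod m)"
  shows "[r ^ (x mod n) = r ^ x] (mod m)"
proof -
  have "[1 ^ (x div n) * r ^ (x mod n) = (r ^ n) ^ (x div n) * r ^ (x mod n)] (mod m)"
    using assms by (intro cong_mult cong_pow cong_refl) (rule cong_sym)
  moreover have "(r ^ n) ^ (x div n) * r ^ (x mod n) = r ^ x"
    by (simp flip: power_mult power_add)
  ultimately show ?thesis
    by simp
qed

lemma dvd_gcd_pow_diff_one_iff_ord_dvd: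
  fixes q m r j :: nat
  assumes "q dvd m" "0 < r"
  shows "q dvd gcd m (r ^ j - 1) \<longleftrightarrow> ord q r dvd j"
proof -
  have "q dvd gcd m (r ^ j - 1) \<longleftrightarrow> [r ^ j = 1] (mod q)"
    using assms by (simp add: cong_altdef_nat)
  also have "\<dots> \<longleftrightarrow> ord q r dvd j"
    by (rule ord_divides)
  finally show ?thesis .
qed

lemma Lcm_ord_dvd:
  fixes q :: "'i \<Rightarrow> nat"
  assumes "\<forall>i\<in>T. q i dvd m" "[r ^ n = 1] (mod m)"
  shows "Lcm ((\<lambda>i. ord (q i) r) ` T) dvd n"
proof -
  have "ord (q i) r dvd n" if "i \<in> T" for i
    using cong_dvd_modulus_nat[OF assms(2)] assms(1) that by (simp add: ord_divides')
  then show ?thesis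
    by (simp add: Lcm_dvd_iff)
qed

section \<open>Unitary divisors of products of prime powers\<close>

lemma gcd_mult_distrib_coprime:
  fixes a b c :: nat
  assumes "coprime a b"
  shows "gcd (a * b) c = gcd a c * gcd b c"
proof (rule dvd_antisym)
  obtain h1 h2 where h: "gcd (a * b) c = h1 * h2" "h1 dvd a" "h2 dvd b"
    using dvd_productE[OF gcd_dvd1] by blast
  then have "h1 dvd c" "h2 dvd c"
    by (metis dvd_mult_right dvd_mult_left gcd_dvd2)+
  then show "gcd (a * b) c dvd gcd a c * gcd b c"
    using h by (simp add: mult_dvd_mono)
  have "coprime (gcd a c) (gcd b c)"
    using assms by (meson coprime_divisors gcd_dvd1)
  then show "gcd a c * gcd b c dvd gcd (a * b) c"
    by (simp add: coprime_mult_dvd_iff mult_dvd_mono)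
qed

lemma gcd_prod_distrib_pairwise_coprime:
  fixes q :: "'i \<Rightarrow> nat"
  assumes "finite I" "pairwise (\<lambda>l l'. coprime (q l) (q l')) I"
  shows "gcd (\<Prod>l\<in>I. q l) x = (\<Prod>l\<in>I. gcd (q l) x)"
  using assms
proof (induction I rule: finite_induct)
  case (insert a I)
  then have "coprime (q a) (\<Prod>l\<in>I. q l)"
    by (intro prod_coprime_right) (auto simp: pairwise_insert)
  with insert show ?case
    by (simp add: gcd_mult_distrib_coprime pairwise_insert)
qed simp

lemma prime_power_dvd_or_coprime:
  fixes p d e :: nat
  assumes "Factorial_Ring.prime p" "coprime d e" "p ^ k dvd d * e"
  shows "p ^ k dvd d \<or> coprime (p ^ k) d"
proof (cases "p dvd d")
  case True
  then have "\<not> p dvd e"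
    using assms(1,2) coprime_common_divisor_nat by (metis not_prime_1)
  then have "coprime (p ^ k) e"
    using assms(1) by (simp add: prime_imp_coprime coprime_power_left_iff)
  then show ?thesis
    using assms(3) by (simp add: coprime_dvd_mult_left_iff)
next
  case False
  then show ?thesis
    using assms(1) by (simp add: prime_imp_coprime coprime_power_left_iff)
qed

lemma pairwise_coprime_prime_powers:
  fixes p \<alpha> :: "'i \<Rightarrow> nat"
  assumes "inj_on p I" "\<forall>l\<in>I. Factorial_Ring.prime (p l)"
  shows "pairwise (\<lambda>l l'. coprime (p l ^ \<alpha> l) (p l' ^ \<alpha> l')) I"
proof (rule pairwiseI)
  fix l l'
  assume "l \<in> I" "l' \<in> I" "l \<noteq> l'"
  then have "coprime (p l) (p l')"
    using assms by (simp add: primes_coprime inj_on_eq_iff)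
  then show "coprime (p l ^ \<alpha> l) (p l' ^ \<alpha> l')"
    by simp
qed

lemma unitary_divisor_eq_prod_prime_powers:
  fixes p \<alpha> :: "'i \<Rightarrow> nat"
  assumes "finite I" "inj_on p I" "\<forall>l\<in>I. Factorial_Ring.prime (p l)"
    and "m = (\<Prod>l\<in>I. p l ^ \<alpha> l)" "d dvd m" "coprime d (m div d)"
  shows "d = (\<Prod>l\<in>{l\<in>I. p l ^ \<alpha> l dvd d}. p l ^ \<alpha> l)"
proof -
  have gcd_factor: "gcd (p l ^ \<alpha> l) d = (if p l ^ \<alpha> l dvd d then p l ^ \<alpha> l else 1)"
    if "l \<in> I" for l
  proof -
    have "p l ^ \<alpha> l dvd m"
      unfolding assms(4) using assms(1) that by (rule dvd_prodI)
    then have "p l ^ \<alpha> l dvd d * (m div d)"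
      using assms(5) by simp
    moreover have "Factorial_Ring.prime (p l)"
      using assms(3) that by blast
    ultimately consider "p l ^ \<alpha> l dvd d" | "coprime (p l ^ \<alpha> l) d"
      using prime_power_dvd_or_coprime[OF _ assms(6)] by blast
    then show ?thesis
    proof cases
      case 1
      then show ?thesis
        by (simp add: gcd_nat.absorb1)
    next
      case 2
      then have "gcd (p l ^ \<alpha> l) d = 1"
        by (simp only: coprime_iff_gcd_eq_1)
      then show ?thesis
        using gcd_nat.absorb1[of "p l ^ \<alpha> l" d] by auto
    qed
  qed
  have "d = gcd m d"
    using assms(5) by (simp add: gcd_nat.absorb2)
  also have "\<dots> = (\<Prod>l\<in>I. gcd (p l ^ \<alpha> l) d)"
    unfolding assms(4) using assms(1) pairwise_coprime_prime_powers[OF assms(2,3)]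
    by (rule gcd_prod_distrib_pairwise_coprime)
  also have "\<dots> = (\<Prod>l\<in>I. if p l ^ \<alpha> l dvd d then p l ^ \<alpha> l else 1)"
    using gcd_factor by (rule prod.cong[OF refl])
  also have "\<dots> = (\<Prod>l\<in>{l\<in>I. p l ^ \<alpha> l dvd d}. p l ^ \<alpha> l)"
    using assms(1) by (rule prod.inter_filter[symmetric])
  finally show ?thesis .
qed

lemma prod_diff_mult_prod_eq_sum_Pow:
  fixes a b :: "'i \<Rightarrow> 'a::comm_ring_1"
  assumes "finite I" "S \<subseteq> I"
  shows "(\<Prod>l\<in>I - S. a l) * (\<Prod>l\<in>S. b l)
           = (\<Sum>T\<in>Pow S. (\<Prod>l\<in>I - T. a l) * (\<Prod>l\<in>T. b l - a l))"
proof -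
  have "finite S"
    using assms finite_subset by blast
  have "(\<Prod>l\<in>S. b l) = (\<Prod>l\<in>S. (b l - a l) + a l)"
    by simp
  also have "\<dots> = (\<Sum>T\<in>Pow S. (\<Prod>l\<in>T. b l - a l) * (\<Prod>l\<in>S - T. a l))"
    using \<open>finite S\<close> by (rule prod_add)
  finally have "(\<Prod>l\<in>I - S. a l) * (\<Prod>l\<in>S. b l)
      = (\<Sum>T\<in>Pow S. (\<Prod>l\<in>T. b l - a l) * ((\<Prod>l\<in>S - T. a l) * (\<Prod>l\<in>I - S. a l)))"
    by (simp add: sum_distrib_left mult_ac)
  also have "\<dots> = (\<Sum>T\<in>Pow S. (\<Prod>l\<in>I - T. a l) * (\<Prod>l\<in>T. b l - a l))"
  proof (rule sum.cong[OF refl])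
    fix T
    assume "T \<in> Pow S"
    then have "I - T = (S - T) \<union> (I - S)"
      using assms(2) by blast
    then have "(\<Prod>l\<in>I - T. a l) = (\<Prod>l\<in>(S - T) \<union> (I - S). a l)"
      by simp
    also have "\<dots> = (\<Prod>l\<in>S - T. a l) * (\<Prod>l\<in>I - S. a l)"
      using assms(1) \<open>finite S\<close> by (intro prod.union_disjoint) auto
    finally have "(\<Prod>l\<in>I - T. a l) = (\<Prod>l\<in>S - T. a l) * (\<Prod>l\<in>I - S. a l)" .
    then show "(\<Prod>l\<in>T. b l - a l) * ((\<Prod>l\<in>S - T. a l) * (\<Prod>l\<in>I - S. a l))
                 = (\<Prod>l\<in>I - T. a l) * (\<Prod>l\<in>T. b l - a l)"
      by (simp add: mult.commute)
  qed
  finally show ?thesis .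
qed

section \<open>Sums of element orders of cyclic groups\<close>

lemma psi_sub_eq_sum_ord:
  assumes "group G" "subgroup H G"
  shows "psi_sub G H = (\<Sum>x\<in>H. group.ord G x)"
proof -
  have "group.ord (G\<lparr>carrier := H\<rparr>) x = group.ord G x" if "x \<in> H" for x
  proof -
    have "x \<in> carrier G"
      using subgroup.subset[OF assms(2)] that by blast
    then have "x [^]\<^bsub>G\<lparr>carrier := H\<rparr>\<^esub> t = \<one>\<^bsub>G\<lparr>carrier := H\<rparr>\<^esub>
                 \<longleftrightarrow> group.ord G x dvd t" for t
      using group.pow_eq_id[OF assms(1)] monoid.nat_pow_consistent[OF group.is_monoid[OF assms(1)]]
      by simp
    then show ?thesis
      using group.ord_unique[OF subgroup.subgroup_is_group[OF assms(2,1)]] that by simp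
  qed
  then show ?thesis
    unfolding psi_sub_def psi_def by simp
qed

lemma ord_integer_mod_group:
  fixes q x :: nat
  assumes "x < q"
  shows "group.ord (integer_mod_group q) (int x) = q div gcd q x"
proof -
  have "int x [^]\<^bsub>integer_mod_group q\<^esub> t = \<one>\<^bsub>integer_mod_group q\<^esub>
          \<longleftrightarrow> q div gcd q x dvd t" for t
  proof -
    have "int x [^]\<^bsub>integer_mod_group q\<^esub> t = \<one>\<^bsub>integer_mod_group q\<^esub> \<longleftrightarrow> q dvd t * x"
      by (simp add: pow_integer_mod_group dvd_eq_mod_eq_0 flip: of_nat_mult of_nat_dvd_iff
          zmod_int)
    also have "\<dots> \<longleftrightarrow> q div gcd q x dvd t"
      using assms by (intro dvd_mult_iff_div_gcd_dvd) simp
    finally show ?thesis .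
  qed
  moreover have "int x \<in> carrier (integer_mod_group q)"
    using assms by (simp add: carrier_integer_mod_group)
  ultimately show ?thesis
    using group.ord_unique[OF group_integer_mod_group] by simp
qed

lemma psi_integer_mod_group:
  fixes q :: nat
  assumes "0 < q"
  shows "psi (integer_mod_group q) = (\<Sum>x<q. q div gcd q x)"
proof -
  have "carrier (integer_mod_group q) = int ` {..<q}"
    using assms by (simp add: carrier_integer_mod_group lessThan_atLeast0 image_int_atLeastLessThan)
  then show ?thesis
    unfolding psi_def by (simp add: sum.reindex ord_integer_mod_group)
qed

lemma bij_betw_mod_pair:
  fixes a b :: nat
  assumes "coprime a b"
  shows "bij_betw (\<lambda>x. (x mod a, x mod b)) {..<a * b} ({..<a} \<times> {..<b})"
proof (cases "a = 0 \<or> b = 0")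
  case False
  have inj: "inj_on (\<lambda>x. (x mod a, x mod b)) {..<a * b}"
  proof (rule inj_onI)
    fix x y
    assume "x \<in> {..<a * b}" "y \<in> {..<a * b}" "(x mod a, x mod b) = (y mod a, y mod b)"
    then have "[x = y] (mod a)" "[x = y] (mod b)" "x < a * b" "y < a * b"
      by (simp_all add: cong_def)
    then show "x = y"
      using coprime_cong_mult_nat[OF _ _ assms, of x y] by (simp add: cong_def)
  qed
  moreover have "(\<lambda>x. (x mod a, x mod b)) ` {..<a * b} \<subseteq> {..<a} \<times> {..<b}"
    using False by auto
  moreover have "card ((\<lambda>x. (x mod a, x mod b)) ` {..<a * b}) = card ({..<a} \<times> {..<b})"
    using inj by (simp add: card_image card_cartesian_product)
  ultimately show ?thesis
    unfolding bij_betw_def by (simp add: card_subset_eq)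
qed (auto simp: bij_betw_def)

lemma psi_integer_mod_group_mult:
  fixes a b :: nat
  assumes "coprime a b" "0 < a" "0 < b"
  shows "psi (integer_mod_group (a * b)) = psi (integer_mod_group a) * psi (integer_mod_group b)"
proof -
  have "a * b div gcd (a * b) x = a div gcd a (x mod a) * (b div gcd b (x mod b))" for x
    using assms by (simp add: gcd_mult_distrib_coprime gcd_mod_right div_mult_div_if_dvd)
  then have "psi (integer_mod_group (a * b))
               = (\<Sum>x<a * b. (\<lambda>(y, z). a div gcd a y * (b div gcd b z)) (x mod a, x mod b))"
    using assms by (simp add: psi_integer_mod_group)
  also have "\<dots> = (\<Sum>(y, z)\<in>{..<a} \<times> {..<b}. a div gcd a y * (b div gcd b z))"
    using bij_betw_mod_pair[OF assms(1)] by (rule sum.reindex_bij_betw)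
  also have "\<dots> = psi (integer_mod_group a) * psi (integer_mod_group b)"
    using assms by (simp add: psi_integer_mod_group sum.cartesian_product sum_product)
  finally show ?thesis .
qed

lemma psi_integer_mod_group_prod:
  fixes q :: "'i \<Rightarrow> nat"
  assumes "finite I" "\<forall>l\<in>I. 0 < q l" "pairwise (\<lambda>l l'. coprime (q l) (q l')) I"
  shows "psi (integer_mod_group (\<Prod>l\<in>I. q l)) = (\<Prod>l\<in>I. psi (integer_mod_group (q l)))"
  using assms
proof (induction I rule: finite_induct)
  case empty
  then show ?case
    by (simp add: psi_integer_mod_group)
next
  case (insert a I)
  then have "coprime (q a) (\<Prod>l\<in>I. q l)"
    by (intro prod_coprime_right) (auto simp: pairwise_insert)
  with insert show ?case
    by (simp add: psi_integer_mod_group_mult pairwise_insert)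
qed

lemma sum_mod_periodic:
  fixes f :: "nat \<Rightarrow> nat"
  assumes "d dvd m"
  shows "(\<Sum>i<m. f (i mod d)) = m div d * (\<Sum>i<d. f i)"
proof -
  obtain c where m: "m = c * d"
    using assms by (metis dvd_def mult.commute)
  have block: "(\<Sum>i\<in>{q * d..<q * d + d}. f (i mod d)) = (\<Sum>i<d. f i)" for q
  proof -
    have "(\<Sum>i\<in>{q * d..<q * d + d}. f (i mod d)) = (\<Sum>i\<in>{0..<d}. f ((i + q * d) mod d))"
      using sum.shift_bounds_nat_ivl[of "\<lambda>i. f (i mod d)" 0 "q * d" d] by (simp add: add.commute)
    also have "\<dots> = (\<Sum>i<d. f i)"
      by (intro sum.cong) auto
    finally show ?thesis .
  qed
  have "(\<Sum>i<m. f (i mod d)) = (\<Sum>q<c. \<Sum>i\<in>{q * d..<q * d + d}. f (i mod d))"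
    unfolding m by (rule sum.nat_group[symmetric])
  also have "\<dots> = c * (\<Sum>i<d. f i)"
    by (simp add: block)
  finally show ?thesis
    by (cases "d = 0") (simp_all add: m)
qed

lemma cofactor_mult_psi_eq_sum_Pow:
  fixes p \<alpha> :: "'i \<Rightarrow> nat"
  assumes "finite I" "inj_on p I" "\<forall>l\<in>I. Factorial_Ring.prime (p l)"
    and "m = (\<Prod>l\<in>I. p l ^ \<alpha> l)" "d dvd m" "coprime d (m div d)"
  shows "int (m div d * psi (integer_mod_group d))
           = (\<Sum>T\<in>Pow {l\<in>I. p l ^ \<alpha> l dvd d}. (\<Prod>l\<in>I - T. int (p l ^ \<alpha> l))
               * (\<Prod>l\<in>T. int (psi (integer_mod_group (p l ^ \<alpha> l))) - int (p l ^ \<alpha> l)))"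
proof -
  define S where "S = {l\<in>I. p l ^ \<alpha> l dvd d}"
  have "S \<subseteq> I" "finite S"
    using assms(1) by (auto simp: S_def)
  have pos: "\<forall>l\<in>I. 0 < p l ^ \<alpha> l"
    using assms(3) by (simp add: prime_gt_0_nat)
  have d: "d = (\<Prod>l\<in>S. p l ^ \<alpha> l)"
    unfolding S_def using assms by (rule unitary_divisor_eq_prod_prime_powers)
  have "m = (\<Prod>l\<in>I - S. p l ^ \<alpha> l) * d"
    unfolding assms(4) d using \<open>S \<subseteq> I\<close> assms(1) by (rule prod.subset_diff)
  moreover have "0 < d"
    unfolding d using pos \<open>S \<subseteq> I\<close> by (intro prod_pos) blast
  ultimately have "m div d = (\<Prod>l\<in>I - S. p l ^ \<alpha> l)"
    by simp
  moreover have "psi (integer_mod_group d) = (\<Prod>l\<in>S. psi (integer_mod_group (p l ^ \<alpha> l)))"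
    unfolding d using \<open>finite S\<close>
  proof (rule psi_integer_mod_group_prod)
    show "\<forall>l\<in>S. 0 < p l ^ \<alpha> l"
      using pos \<open>S \<subseteq> I\<close> by blast
    show "pairwise (\<lambda>l l'. coprime (p l ^ \<alpha> l) (p l' ^ \<alpha> l')) S"
      using pairwise_coprime_prime_powers[OF assms(2,3)] \<open>S \<subseteq> I\<close> by (rule pairwise_subset)
  qed
  ultimately have "int (m div d * psi (integer_mod_group d))
      = int ((\<Prod>l\<in>I - S. p l ^ \<alpha> l) * (\<Prod>l\<in>S. psi (integer_mod_group (p l ^ \<alpha> l))))"
    by (simp only:)
  also have "\<dots> = (\<Prod>l\<in>I - S. int (p l ^ \<alpha> l)) * (\<Prod>l\<in>S. int (psi (integer_mod_group (p l ^ \<alpha> l))))"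
    by (simp only: of_nat_mult of_nat_prod)
  also have "\<dots> = (\<Sum>T\<in>Pow S. (\<Prod>l\<in>I - T. int (p l ^ \<alpha> l))
               * (\<Prod>l\<in>T. int (psi (integer_mod_group (p l ^ \<alpha> l))) - int (p l ^ \<alpha> l)))"
    using assms(1) \<open>S \<subseteq> I\<close> by (rule prod_diff_mult_prod_eq_sum_Pow)
  finally show ?thesis
    unfolding S_def .
qed

section \<open>The groups ZM(m, n, r)\<close>

lemma ZM_mult:
  "(j, i) \<otimes>\<^bsub>ZM m n r\<^esub> (l, k) = ((j + l) mod n, (i * r ^ l + k) mod m)"
  by (simp add: ZM_def)

lemma ZM_one: "\<one>\<^bsub>ZM m n r\<^esub> = (0, 0)"
  by (simp add: ZM_def)

lemma ZM_mult_assoc: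
  fixes x y z :: "nat \<times> nat"
  assumes "[r ^ n = 1] (mod m)"
  shows "x \<otimes>\<^bsub>ZM m n r\<^esub> y \<otimes>\<^bsub>ZM m n r\<^esub> z = x \<otimes>\<^bsub>ZM m n r\<^esub> (y \<otimes>\<^bsub>ZM m n r\<^esub> z)"
proof -
  obtain j i l k s t where xyz: "x = (j, i)" "y = (l, k)" "z = (s, t)"
    by (metis surj_pair)
  have "((j + l) mod n + s) mod n = (j + (l + s) mod n) mod n"
    by (simp add: mod_add_left_eq mod_add_right_eq add.assoc)
  moreover have "[(i * r ^ l + k) mod m * r ^ s + t = i * (r ^ l * r ^ s) + (k * r ^ s + t)] (mod m)"
  proof -
    have "[(i * r ^ l + k) mod m * r ^ s + t = (i * r ^ l + k) * r ^ s + t] (mod m)"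
      by (intro cong_add cong_mult cong_refl) (simp add: cong_def)
    moreover have "(i * r ^ l + k) * r ^ s + t = i * (r ^ l * r ^ s) + (k * r ^ s + t)"
      by (simp add: algebra_simps)
    ultimately show ?thesis
      by simp
  qed
  moreover have "[i * r ^ ((l + s) mod n) + (k * r ^ s + t) mod m
                  = i * (r ^ l * r ^ s) + (k * r ^ s + t)] (mod m)"
    using pow_mod_exponent_cong[OF assms, of "l + s"]
    by (intro cong_add cong_scalar_left) (simp_all add: cong_def power_add)
  ultimately show ?thesis
    unfolding xyz ZM_mult cong_def by simp
qed

lemma ZM_left_inverse:
  fixes m n r j i :: nat
  assumes "[r ^ n = 1] (mod m)" "j < n" "i < m"
  defines "l \<equiv> (n - j) mod n"
  shows "(l, (m - i) * r ^ l mod m) \<otimes>\<^bsub>ZM m n r\<^esub> (j, i) = \<one>\<^bsub>ZM m n r\<^esub>"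
proof -
  have "(l + j) mod n = 0"
    using assms(2) by (simp add: l_def mod_add_left_eq)
  then have "[r ^ l * r ^ j = 1] (mod m)"
    using cong_sym[OF pow_mod_exponent_cong[OF assms(1), of "l + j"]] by (simp add: power_add)
  then have "[(m - i) * (r ^ l * r ^ j) + i = (m - i) * 1 + i] (mod m)"
    by (intro cong_add cong_scalar_left cong_refl)
  moreover have "[(m - i) * r ^ l mod m * r ^ j + i = (m - i) * (r ^ l * r ^ j) + i] (mod m)"
    by (intro cong_add cong_refl) (simp add: cong_def mod_mult_left_eq mult.assoc)
  ultimately have "((m - i) * r ^ l mod m * r ^ j + i) mod m = 0"
    using assms(3) unfolding cong_def by simp
  with \<open>(l + j) mod n = 0\<close> show ?thesis
    by (simp add: ZM_mult ZM_one)
qed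

lemma group_ZM:
  assumes "0 < m" "0 < n" "[r ^ n = 1] (mod m)"
  shows "group (ZM m n r)"
proof (rule groupI)
  fix x
  assume "x \<in> carrier (ZM m n r)"
  then obtain j i where ji: "x = (j, i)" "j < n" "i < m"
    by (auto simp: ZM_def)
  define l where "l = (n - j) mod n"
  show "\<exists>y\<in>carrier (ZM m n r). y \<otimes>\<^bsub>ZM m n r\<^esub> x = \<one>\<^bsub>ZM m n r\<^esub>"
  proof
    show "(l, (m - i) * r ^ l mod m) \<otimes>\<^bsub>ZM m n r\<^esub> x = \<one>\<^bsub>ZM m n r\<^esub>"
      unfolding l_def ji(1) using assms(3) ji(2,3) by (rule ZM_left_inverse)
    show "(l, (m - i) * r ^ l mod m) \<in> carrier (ZM m n r)"
      using assms(1,2) by (simp add: ZM_def l_def)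
  qed
qed (use assms ZM_mult_assoc in \<open>auto simp: ZM_def\<close>)

lemma ZM_pow:
  "(j, i) [^]\<^bsub>ZM m n r\<^esub> t = (t * j mod n, i * (\<Sum>s<t. (r ^ j) ^ s) mod m)"
proof (induction t)
  case (Suc t)
  define S where "S = (\<Sum>s<t. (r ^ j) ^ s)"
  have "[i * S mod m * r ^ j + i = i * S * r ^ j + i] (mod m)"
    by (intro cong_add cong_mult cong_refl) (simp add: cong_def)
  then have "(i * S mod m * r ^ j + i) mod m = (i * S * r ^ j + i) mod m"
    unfolding cong_def .
  also have "i * S * r ^ j + i = i * (\<Sum>s<Suc t. (r ^ j) ^ s)"
    by (simp add: S_def sum.lessThan_Suc_shift sum_distrib_left algebra_simps del: sum.lessThan_Suc)
  finally have "(i * S mod m * r ^ j + i) mod m = i * (\<Sum>s<Suc t. (r ^ j) ^ s) mod m" .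
  moreover have "(t * j mod n + j) mod n = Suc t * j mod n"
    by (metis add.commute mod_add_left_eq mult_Suc)
  ultimately show ?case
    using Suc by (simp add: ZM_mult S_def)
qed (simp add: ZM_one)

lemma ZM_pow_eq_one_iff:
  fixes m n r j i t :: nat
  assumes "0 < m" "0 < n" "0 < r" "coprime m n" "[r ^ n = 1] (mod m)"
  defines "d \<equiv> gcd m (r ^ j - 1)"
  shows "(j, i) [^]\<^bsub>ZM m n r\<^esub> t = \<one>\<^bsub>ZM m n r\<^esub> \<longleftrightarrow> n div gcd n j * (d div gcd d i) dvd t"
proof -
  have "(j, i) [^]\<^bsub>ZM m n r\<^esub> t = \<one>\<^bsub>ZM m n r\<^esub>
          \<longleftrightarrow> n dvd t * j \<and> m dvd i * (\<Sum>s<t. (r ^ j) ^ s)"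
    by (simp add: ZM_pow ZM_one dvd_eq_mod_eq_0)
  also have "\<dots> \<longleftrightarrow> n div gcd n j dvd t \<and> d div gcd d i dvd t"
  proof (cases "n dvd t * j")
    case True
    have "ord m r dvd n"
      using assms(5) by (rule ord_divides[THEN iffD1])
    then have "ord m r dvd j * n" "ord m r dvd j * t"
      using True by (auto simp: mult.commute intro: dvd_trans)
    then have "[(r ^ j) ^ n = 1] (mod m)" "[(r ^ j) ^ t = 1] (mod m)"
      by (simp_all only: power_mult[symmetric] ord_divides)
    then have "m dvd i * (\<Sum>s<t. (r ^ j) ^ s) \<longleftrightarrow> d div gcd d i dvd t"
      unfolding d_def using assms(1,3,4) by (intro dvd_mult_sum_powers_iff) simp_all
    then show ?thesis
      using True assms(2) by (simp add: dvd_mult_iff_div_gcd_dvd)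
  qed (use assms(2) in \<open>simp add: dvd_mult_iff_div_gcd_dvd\<close>)
  also have "\<dots> \<longleftrightarrow> n div gcd n j * (d div gcd d i) dvd t"
  proof (rule coprime_mult_dvd_iff[symmetric])
    have "d div gcd d i dvd m"
      using div_gcd_dvd_self[of d i] by (rule dvd_trans) (simp add: d_def)
    moreover have "coprime n m"
      using assms(4) by (simp add: coprime_commute)
    ultimately show "coprime (n div gcd n j) (d div gcd d i)"
      by (rule coprime_divisors[OF div_gcd_dvd_self])
  qed
  finally show ?thesis .
qed

lemma ord_ZM:
  assumes "0 < r" "coprime m n" "[r ^ n = 1] (mod m)" "j < n" "i < m"
  shows "group.ord (ZM m n r) (j, i)
           = n div gcd n j * (gcd m (r ^ j - 1) div gcd (gcd m (r ^ j - 1)) i)"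
proof -
  have "0 < m" "0 < n"
    using assms(4,5) by auto
  moreover have "(j, i) \<in> carrier (ZM m n r)"
    using assms(4,5) by (simp add: ZM_def)
  ultimately show ?thesis
    using group.ord_unique[OF group_ZM] ZM_pow_eq_one_iff assms(1-3) by simp
qed

lemma psi_ZM:
  assumes "0 < m" "0 < n" "0 < r" "coprime m n" "[r ^ n = 1] (mod m)"
  shows "psi (ZM m n r) = (\<Sum>j<n. n div gcd n j
           * (m div gcd m (r ^ j - 1) * psi (integer_mod_group (gcd m (r ^ j - 1)))))"
proof -
  have "psi (ZM m n r) = (\<Sum>j<n. \<Sum>i<m. group.ord (ZM m n r) (j, i))"
    unfolding psi_def by (simp add: ZM_def atLeast0LessThan sum.cartesian_product)
  also have "\<dots> = (\<Sum>j<n. n div gcd n j * (\<Sum>i<m. gcd m (r ^ j - 1) div gcd (gcd m (r ^ j - 1)) i))"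
    using assms by (simp add: ord_ZM sum_distrib_left)
  also have "\<dots> = (\<Sum>j<n. n div gcd n j
           * (m div gcd m (r ^ j - 1) * psi (integer_mod_group (gcd m (r ^ j - 1)))))"
  proof (intro sum.cong refl arg_cong2[where f = "(*)"])
    fix j
    define d where "d = gcd m (r ^ j - 1)"
    have "0 < d"
      using assms(1) by (simp add: d_def)
    have "(\<Sum>i<m. d div gcd d i) = (\<Sum>i<m. (\<lambda>x. d div gcd d x) (i mod d))"
      using \<open>0 < d\<close> by (simp add: gcd_mod_right)
    also have "\<dots> = m div d * (\<Sum>x<d. d div gcd d x)"
      by (rule sum_mod_periodic) (simp add: d_def)
    also have "\<dots> = m div d * psi (integer_mod_group d)"
      using \<open>0 < d\<close> by (simp add: psi_integer_mod_group)
    finally show "(\<Sum>i<m. gcd m (r ^ j - 1) div gcd (gcd m (r ^ j - 1)) i)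
                  = m div gcd m (r ^ j - 1) * psi (integer_mod_group (gcd m (r ^ j - 1)))"
      by (simp add: d_def)
  qed
  finally show ?thesis .
qed

lemma generate_ZM_b_pow:
  assumes "0 < m" "0 < n" "[r ^ n = 1] (mod m)" "e dvd n"
  shows "generate (ZM m n r) {ZM_b m n [^]\<^bsub>ZM m n r\<^esub> e} = (\<lambda>j. (j, 0)) ` {j. j < n \<and> e dvd j}"
proof -
  interpret G: group "ZM m n r"
    using assms(1-3) by (rule group_ZM)
  have b_pow: "ZM_b m n [^]\<^bsub>ZM m n r\<^esub> t = (t mod n, 0)" for t
    by (simp add: ZM_b_def ZM_pow mod_mult_right_eq)
  have b: "ZM_b m n \<in> carrier (ZM m n r)"
    using assms(1,2) by (simp add: ZM_b_def ZM_def)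
  have "generate (ZM m n r) {ZM_b m n [^]\<^bsub>ZM m n r\<^esub> e}
          = {(ZM_b m n [^]\<^bsub>ZM m n r\<^esub> e) [^]\<^bsub>ZM m n r\<^esub> t | t. t \<in> (UNIV :: nat set)}"
    by (rule G.generate_pow_on_finite_carrier[OF _ G.nat_pow_closed[OF b]]) (simp add: ZM_def)
  also have "\<dots> = {(e * t mod n, 0) | t. True}"
    unfolding G.nat_pow_pow[OF b] unfolding b_pow by simp
  also have "\<dots> = (\<lambda>j. (j, 0)) ` {j. j < n \<and> e dvd j}"
  proof
    show "{(e * t mod n, 0) | t. True} \<subseteq> (\<lambda>j. (j, 0)) ` {j. j < n \<and> e dvd j}"
      using assms(2,4) by (auto simp: dvd_mod)
    show "(\<lambda>j. (j, 0)) ` {j. j < n \<and> e dvd j} \<subseteq> {(e * t mod n, 0) | t. True}"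
    proof
      fix x
      assume "x \<in> (\<lambda>j. (j, 0)) ` {j. j < n \<and> e dvd j}"
      then obtain c where "x = (e * c, 0)" "e * c < n"
        by (auto elim!: dvdE)
      moreover have "(e * c mod n, 0) \<in> {(e * t mod n, 0) | t. True}"
        by blast
      ultimately show "x \<in> {(e * t mod n, 0) | t. True}"
        by simp
    qed
  qed
  finally show ?thesis .
qed

lemma psi_sub_generate_ZM_b_pow:
  assumes "0 < m" "0 < n" "0 < r" "coprime m n" "[r ^ n = 1] (mod m)" "e dvd n"
  shows "psi_sub (ZM m n r) (generate (ZM m n r) {ZM_b m n [^]\<^bsub>ZM m n r\<^esub> e})
           = (\<Sum>j | j < n \<and> e dvd j. n div gcd n j)"
proof -
  interpret G: group "ZM m n r"
    using assms(1,2,5) by (rule group_ZM)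
  have b: "ZM_b m n \<in> carrier (ZM m n r)"
    using assms(1,2) by (simp add: ZM_b_def ZM_def)
  have "subgroup (generate (ZM m n r) {ZM_b m n [^]\<^bsub>ZM m n r\<^esub> e}) (ZM m n r)"
    using G.nat_pow_closed[OF b] by (intro G.generate_is_subgroup) simp
  then have "psi_sub (ZM m n r) (generate (ZM m n r) {ZM_b m n [^]\<^bsub>ZM m n r\<^esub> e})
      = (\<Sum>x\<in>(\<lambda>j. (j, 0)) ` {j. j < n \<and> e dvd j}. group.ord (ZM m n r) x)"
    using G.is_group generate_ZM_b_pow[OF assms(1,2,5,6)] by (simp add: psi_sub_eq_sum_ord)
  also have "\<dots> = (\<Sum>j | j < n \<and> e dvd j. group.ord (ZM m n r) (j, 0))"
    by (rule sum.reindex[unfolded comp_def]) (auto simp: inj_on_def)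
  also have "\<dots> = (\<Sum>j | j < n \<and> e dvd j. n div gcd n j)"
    using assms by (intro sum.cong refl) (simp add: ord_ZM)
  finally show ?thesis .
qed

lemma cofactor_mult_psi_gcd_pow_diff_one:
  fixes p \<alpha> :: "'i \<Rightarrow> nat"
  assumes "finite I" "inj_on p I" "\<forall>l\<in>I. Factorial_Ring.prime (p l)"
    and "m = (\<Prod>l\<in>I. p l ^ \<alpha> l)" "0 < r" "coprime m n" "[r ^ n = 1] (mod m)"
  shows "int (m div gcd m (r ^ j - 1) * psi (integer_mod_group (gcd m (r ^ j - 1))))
           = (\<Sum>T | T \<subseteq> I \<and> Lcm ((\<lambda>l. ord (p l ^ \<alpha> l) r) ` T) dvd j.
                (\<Prod>l\<in>I - T. int (p l ^ \<alpha> l))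
              * (\<Prod>l\<in>T. int (psi (integer_mod_group (p l ^ \<alpha> l))) - int (p l ^ \<alpha> l)))"
proof -
  define d where "d = gcd m (r ^ j - 1)"
  have "0 < m"
    using assms(3,4) by (simp add: prime_gt_0_nat prod_pos)
  have "[(r ^ j) ^ n = 1] (mod m)"
    using cong_pow[OF assms(7), of j] by (simp flip: power_mult add: mult.commute)
  then have "coprime d (m div d)"
    unfolding d_def using \<open>0 < m\<close> assms(5,6) by (intro coprime_gcd_diff_one_cofactor) simp_all
  have "p l ^ \<alpha> l dvd d \<longleftrightarrow> ord (p l ^ \<alpha> l) r dvd j" if "l \<in> I" for l
  proof -
    have "p l ^ \<alpha> l dvd m"
      unfolding assms(4) using assms(1) that by (rule dvd_prodI)
    then show ?thesis
      unfolding d_def using assms(5) by (rule dvd_gcd_pow_diff_one_iff_ord_dvd)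
  qed
  then have "Pow {l\<in>I. p l ^ \<alpha> l dvd d} = {T. T \<subseteq> I \<and> Lcm ((\<lambda>l. ord (p l ^ \<alpha> l) r) ` T) dvd j}"
    by (auto simp: Lcm_dvd_iff)
  moreover have "int (m div d * psi (integer_mod_group d))
      = (\<Sum>T\<in>Pow {l\<in>I. p l ^ \<alpha> l dvd d}. (\<Prod>l\<in>I - T. int (p l ^ \<alpha> l))
          * (\<Prod>l\<in>T. int (psi (integer_mod_group (p l ^ \<alpha> l))) - int (p l ^ \<alpha> l)))"
    using \<open>coprime d (m div d)\<close> by (rule cofactor_mult_psi_eq_sum_Pow[OF assms(1-4), rotated])
      (simp add: d_def)
  ultimately show ?thesis
    unfolding d_def by (simp only:)
qed

lemma psi_ZM_eq_sum_Pow: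
  fixes p \<alpha> :: "'i \<Rightarrow> nat"
  assumes "finite I" "inj_on p I" "\<forall>l\<in>I. Factorial_Ring.prime (p l)"
    and "m = (\<Prod>l\<in>I. p l ^ \<alpha> l)" "0 < n" "0 < r" "coprime m n" "[r ^ n = 1] (mod m)"
  shows "int (psi (ZM m n r))
           = (\<Sum>T\<in>Pow I. (\<Prod>l\<in>I - T. int (p l ^ \<alpha> l))
               * (\<Prod>l\<in>T. int (psi (integer_mod_group (p l ^ \<alpha> l))) - int (p l ^ \<alpha> l))
               * int (psi_sub (ZM m n r) (generate (ZM m n r)
                   {ZM_b m n [^]\<^bsub>ZM m n r\<^esub> Lcm ((\<lambda>l. ord (p l ^ \<alpha> l) r) ` T)})))"
proof -
  define c where "c T = (\<Prod>l\<in>I - T. int (p l ^ \<alpha> l))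
               * (\<Prod>l\<in>T. int (psi (integer_mod_group (p l ^ \<alpha> l))) - int (p l ^ \<alpha> l))" for T
  define e where "e T = Lcm ((\<lambda>l. ord (p l ^ \<alpha> l) r) ` T)" for T
  define w where "w j = int (n div gcd n j)" for j
  have "0 < m"
    using assms(3,4) by (simp add: prime_gt_0_nat prod_pos)
  have "int (psi (ZM m n r))
          = (\<Sum>j<n. w j * int (m div gcd m (r ^ j - 1) * psi (integer_mod_group (gcd m (r ^ j - 1)))))"
    unfolding psi_ZM[OF \<open>0 < m\<close> assms(5-8)] w_def by (simp add: of_nat_sum)
  also have "\<dots> = (\<Sum>j<n. w j * (\<Sum>T | T \<subseteq> I \<and> e T dvd j. c T))"
    unfolding cofactor_mult_psi_gcd_pow_diff_one[OF assms(1-4,6-8)] c_def e_def ..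
  also have "\<dots> = (\<Sum>j<n. \<Sum>T\<in>Pow I. c T * (if e T dvd j then w j else 0))"
  proof (rule sum.cong[OF refl])
    fix j
    have filter: "(\<Sum>T | T \<subseteq> I \<and> e T dvd j. c T) = (\<Sum>T\<in>Pow I. if e T dvd j then c T else 0)"
      using sum.inter_filter[of "Pow I" c "\<lambda>T. e T dvd j"] assms(1) by (simp add: Pow_def)
    show "w j * (\<Sum>T | T \<subseteq> I \<and> e T dvd j. c T)
                 = (\<Sum>T\<in>Pow I. c T * (if e T dvd j then w j else 0))"
      unfolding filter sum_distrib_left by (intro sum.cong refl) simp
  qed
  also have "\<dots> = (\<Sum>T\<in>Pow I. c T * (\<Sum>j<n. if e T dvd j then w j else 0))"
    unfolding sum_distrib_left by (rule sum.swap)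
  also have "\<dots> = (\<Sum>T\<in>Pow I. c T * int (psi_sub (ZM m n r)
                      (generate (ZM m n r) {ZM_b m n [^]\<^bsub>ZM m n r\<^esub> e T})))"
  proof (rule sum.cong[OF refl])
    fix T
    assume "T \<in> Pow I"
    then have "e T dvd n"
      unfolding e_def using assms(1,4,8) by (intro Lcm_ord_dvd) (auto intro: dvd_prodI)
    have "(\<Sum>j<n. if e T dvd j then w j else 0) = (\<Sum>j\<in>{j\<in>{..<n}. e T dvd j}. w j)"
      by (rule sum.inter_filter[symmetric]) simp
    also have "{j\<in>{..<n}. e T dvd j} = {j. j < n \<and> e T dvd j}"
      by auto
    finally show "c T * (\<Sum>j<n. if e T dvd j then w j else 0) = c T * int (psi_sub (ZM m n r)
                    (generate (ZM m n r) {ZM_b m n [^]\<^bsub>ZM m n r\<^esub> e T}))"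
      using \<open>0 < m\<close> assms(5-8) \<open>e T dvd n\<close> by (simp add: w_def of_nat_sum psi_sub_generate_ZM_b_pow)
  qed
  finally show ?thesis
    by (simp add: c_def e_def)
qed

theorem proposition2p3:
  fixes m n r k :: nat and p \<alpha> :: "nat \<Rightarrow> nat"
  assumes "m > 0" and "n > 0" and "r > 0"
    and "gcd m n = 1" and "gcd m (r - 1) = 1"
    and "[r ^ n = 1] (mod m)"
    and "k \<ge> 1"
    and "\<forall>i\<in>{1..k}. Factorial_Ring.prime (p i)"
    and "inj_on p {1..k}"
    and "\<forall>i\<in>{1..k}. \<alpha> i \<ge> 1"
    and "m = (\<Prod>i\<in>{1..k}. p i ^ \<alpha> i)"
  shows "int (psi (ZM m n r)) =
     int m * int (psi (integer_mod_group n))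
     + (\<Sum>T\<in>{T. T \<subseteq> {1..k} \<and> T \<noteq> {}}.
          (\<Prod>i\<in>{1..k} - T. int (p i ^ \<alpha> i))
        * (\<Prod>i\<in>T. int (psi (integer_mod_group (p i ^ \<alpha> i))) - int (p i ^ \<alpha> i))
        * int (psi_sub (ZM m n r)
             (generate (ZM m n r)
               {ZM_b m n [^]\<^bsub>ZM m n r\<^esub> (Lcm ((\<lambda>i. ord (p i ^ \<alpha> i) r) ` T))})))"
proof -
  define g where "g T = (\<Prod>i\<in>{1..k} - T. int (p i ^ \<alpha> i))
    * (\<Prod>i\<in>T. int (psi (integer_mod_group (p i ^ \<alpha> i))) - int (p i ^ \<alpha> i))
    * int (psi_sub (ZM m n r) (generate (ZM m n r)
        {ZM_b m n [^]\<^bsub>ZM m n r\<^esub> (Lcm ((\<lambda>i. ord (p i ^ \<alpha> i) r) ` T))}))" for T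
  have "coprime m n"
    using assms(4) by (rule gcd_eq_1_imp_coprime)
  have "int (psi (ZM m n r)) = (\<Sum>T\<in>Pow {1..k}. g T)"
    unfolding g_def
    using psi_ZM_eq_sum_Pow[OF finite_atLeastAtMost assms(9,8,11,2,3) \<open>coprime m n\<close> assms(6)] .
  also have "Pow {1..k} = insert {} {T. T \<subseteq> {1..k} \<and> T \<noteq> {}}"
    by blast
  also have "(\<Sum>T\<in>insert {} {T. T \<subseteq> {1..k} \<and> T \<noteq> {}}. g T)
               = g {} + (\<Sum>T\<in>{T. T \<subseteq> {1..k} \<and> T \<noteq> {}}. g T)"
    by (intro sum.insert) (auto intro: finite_subset[of _ "Pow {1..k}"])
  also have "g {} = int m * int (psi (integer_mod_group n))"
  proof -
    have "psi_sub (ZM m n r) (generate (ZM m n r) {ZM_b m n [^]\<^bsub>ZM m n r\<^esub> (1::nat)})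
            = psi (integer_mod_group n)"
      using psi_sub_generate_ZM_b_pow[OF assms(1-3) \<open>coprime m n\<close> assms(6), of 1] assms(2)
      by (simp add: psi_integer_mod_group lessThan_def)
    moreover have "(\<Prod>i\<in>{1..k}. int (p i ^ \<alpha> i)) = int m"
      using assms(11) by (simp add: of_nat_prod)
    ultimately show ?thesis
      by (simp add: g_def)
  qed
  finally show ?thesis
    unfolding g_def .
qed

end
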